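(* Let $H=(V,E)$ be a hypergraph on $k\ge2$ vertices and let $d\ge1$ be an integer. Then there exists a set $F\subseteq E$ of at most $kd$ hyperedges such that the hypergraph $H'=(V,E\setminus F)$ satisfies: for every integer $\alpha\ge1$, the number of distinct sets $\delta_{H'}(S)$, over $S\subseteq V$, with $|\delta_{H'}(S)|\le\alpha d$ is at most $(2k)^{2\alpha}$.
   Context: For a hypergraph $H=(V,E)$ and $S\subseteq V$, $\delta_H(S)$ is the set of hyperedges $e\in E$ that are contained in neither $S$ nor $V\setminus S$. Two cuts $S_1,S_2$ cutting exactly the same set of hyperedges are counted once. *)

theory Defs
  imports Main
begin

definition hypergraph :: "'a set \<Rightarrow> 'a set set \<Rightarrow> bool" where
  "hypergraph V E \<longleftrightarrow> finite V \<and> (\<forall>e\<in>E. e \<subseteq> V)"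

definition hcut :: "'a set \<Rightarrow> 'a set set \<Rightarrow> 'a set \<Rightarrow> 'a set set" where
  "hcut V E S = {e \<in> E. \<not> e \<subseteq> S \<and> \<not> e \<subseteq> V - S}"

end

theory Submission
  imports Defs
begin

text \<open>The sets \<open>S \<subseteq> V\<close> cutting no hyperedge of \<open>A\<close> form a group under symmetric difference,
  and two sets have the same cut exactly when they differ by such an element. Hence the cuts
  of \<open>H\<close> are the cosets of this group inside the power set. Greedily deleting edge sets \<open>D\<close>
  whose removal enlarges the group by more than a factor \<open>2^{|D|/d}\<close> stops after at most
  \<open>kd\<close> deletions, since the group never exceeds \<open>2^k\<close> elements. For the remaining hypergraph,
  the number of cuts of size at most \<open>\<alpha>d\<close> is bounded by induction on the index of the
  group inside the subgroup of sets cutting no edge of some \<open>C\<close>: either the index is small, or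
  many edges are cut at all, each of which halves the subgroup when added to \<open>C\<close>, and a
  double count over these edges closes the induction.\<close>

definition uncut :: "'a set \<Rightarrow> 'a set set \<Rightarrow> 'a set set" where
  "uncut V A = {S. S \<subseteq> V \<and> hcut V A S = {}}"

lemma mem_hcut_iff: "e \<in> hcut V A S \<longleftrightarrow> e \<in> A \<and> \<not> e \<subseteq> S \<and> \<not> e \<subseteq> V - S"
  unfolding hcut_def by auto

lemma mem_uncut_iff: "S \<in> uncut V A \<longleftrightarrow> S \<subseteq> V \<and> (\<forall>e\<in>A. e \<subseteq> S \<or> e \<subseteq> V - S)"
  unfolding uncut_def hcut_def by auto

lemma uncut_empty [simp]: "uncut V {} = Pow V"
  by (auto simp: mem_uncut_iff)

lemma uncut_antimono: "A \<subseteq> B \<Longrightarrow> uncut V B \<subseteq> uncut V A"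
  unfolding subset_iff[of "uncut V B"] mem_uncut_iff by blast

lemma finite_uncut: "finite V \<Longrightarrow> finite (uncut V A)"
  by (rule finite_subset[of _ "Pow V"]) (auto simp: uncut_def)

lemma card_uncut_le: "finite V \<Longrightarrow> card (uncut V A) \<le> 2 ^ card V"
  using card_mono[of "Pow V" "uncut V A"] by (auto simp: uncut_def card_Pow)

lemma hypergraph_subset: "hypergraph V E \<Longrightarrow> A \<subseteq> E \<Longrightarrow> hypergraph V A"
  unfolding hypergraph_def by blast

lemma finite_edges: "hypergraph V E \<Longrightarrow> finite E"
  unfolding hypergraph_def by (blast intro: finite_subset[of E "Pow V"])

lemma card_uncut_pos: "hypergraph V A \<Longrightarrow> 0 < card (uncut V A)"
  using finite_uncut[of V A] mem_uncut_iff[of "{}" V A]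
  by (auto simp: hypergraph_def card_gt_0_iff)

lemma hcut_sym_diff:
  assumes "hypergraph V A" and "S \<subseteq> V" and "T \<in> uncut V A"
  shows "hcut V A (sym_diff S T) = hcut V A S"
  using assms unfolding hypergraph_def mem_uncut_iff hcut_def by blast

lemma sym_diff_mem_uncut:
  assumes "hypergraph V A" and "S \<in> uncut V A" and "T \<in> uncut V A"
  shows "sym_diff S T \<in> uncut V A"
  using hcut_sym_diff[OF assms(1) _ assms(3), of S] assms(2,3) by (auto simp: uncut_def)

lemma card_uncut_insert_half:
  assumes hyp: "hypergraph V (insert e A)" and S0: "S0 \<in> uncut V A"
    and cut: "e \<in> hcut V (insert e A) S0"
  shows "2 * card (uncut V (insert e A)) \<le> card (uncut V A)"
proof -
  let ?U = "uncut V (insert e A)"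
  have hypA: "hypergraph V A" and hype: "hypergraph V {e}"
    using hyp by (auto intro: hypergraph_subset)
  have fin: "finite (uncut V A)"
    using hyp finite_uncut unfolding hypergraph_def by blast
  have UA: "?U \<subseteq> uncut V A" by (rule uncut_antimono) blast
  have S0V: "S0 \<subseteq> V" using S0 by (simp add: uncut_def)
  have flip: "sym_diff S0 S \<in> uncut V A - ?U" if S: "S \<in> ?U" for S
  proof -
    have "S \<in> uncut V {e}" using S uncut_antimono[of "{e}" "insert e A"] by blast
    then have eq: "hcut V {e} (sym_diff S0 S) = hcut V {e} S0"
      by (rule hcut_sym_diff[OF hype S0V])
    have "e \<in> hcut V {e} S0" using cut by (simp add: mem_hcut_iff)
    then have "e \<in> hcut V {e} (sym_diff S0 S)" by (simp only: eq)
    then have "e \<in> hcut V (insert e A) (sym_diff S0 S)" by (simp add: mem_hcut_iff)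
    then show ?thesis
      using sym_diff_mem_uncut[OF hypA S0] S UA by (auto simp: uncut_def)
  qed
  have inj: "inj_on (sym_diff S0) ?U" by (rule inj_onI) blast
  have "card ?U = card (sym_diff S0 ` ?U)" by (rule card_image[OF inj, symmetric])
  also have "\<dots> \<le> card (uncut V A - ?U)"
    using flip fin by (intro card_mono) auto
  also have "\<dots> = card (uncut V A) - card ?U"
    using fin UA by (simp add: card_Diff_subset finite_subset)
  finally show ?thesis by linarith
qed

text \<open>The cuts of \<open>E\<close> realised by sets in \<open>uncut V C\<close> are disjoint cosets of \<open>uncut V E\<close>
  inside \<open>uncut V C\<close>.\<close>

lemma card_cuts_mult_card_uncut_le:
  assumes hyp: "hypergraph V E" and CE: "C \<subseteq> E" and \<D>: "\<D> \<subseteq> hcut V E ` uncut V C"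
  shows "card \<D> * card (uncut V E) \<le> card (uncut V C)"
proof -
  obtain rep where rep: "\<And>D. D \<in> \<D> \<Longrightarrow> rep D \<in> uncut V C \<and> hcut V E (rep D) = D"
    using \<D> by (metis f_inv_into_f inv_into_into subsetD)
  define f where "f = (\<lambda>(D, T). sym_diff (rep D) T)"
  have hypC: "hypergraph V C" using hyp CE by (rule hypergraph_subset)
  have fin: "finite (uncut V C)"
    using hyp finite_uncut unfolding hypergraph_def by blast
  have hcut_f: "hcut V E (f (D, T)) = D" if "D \<in> \<D>" "T \<in> uncut V E" for D T
    using hcut_sym_diff[OF hyp _ that(2), of "rep D"] rep[OF that(1)]
    by (simp add: f_def uncut_def)
  have "inj_on f (\<D> \<times> uncut V E)"
  proof (rule inj_onI, clarify)
    fix D T D' T'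
    assume "D \<in> \<D>" "T \<in> uncut V E" "D' \<in> \<D>" "T' \<in> uncut V E" and eq: "f (D, T) = f (D', T')"
    then have "D = D'" using hcut_f by metis
    with eq show "D = D' \<and> T = T'" by (auto simp: f_def)
  qed
  moreover have "f ` (\<D> \<times> uncut V E) \<subseteq> uncut V C"
    using rep uncut_antimono[OF CE, of V]
    by (auto simp: f_def intro!: sym_diff_mem_uncut[OF hypC])
  ultimately have "card (\<D> \<times> uncut V E) \<le> card (uncut V C)"
    using card_inj_on_le fin by blast
  then show ?thesis by (simp add: card_cartesian_product)
qed

definition removal_stable :: "'a set \<Rightarrow> 'a set set \<Rightarrow> nat \<Rightarrow> bool" where
  "removal_stable V A d \<longleftrightarrow>
     (\<forall>D\<subseteq>A. card (uncut V (A - D)) ^ d \<le> card (uncut V A) ^ d * 2 ^ card D)"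

lemma exists_removal_stable:
  assumes "hypergraph V E"
  shows "\<exists>F\<subseteq>E. 2 ^ card F * card (uncut V E) ^ d \<le> card (uncut V (E - F)) ^ d
                 \<and> removal_stable V (E - F) d"
  using assms
proof (induction "2 ^ card V - card (uncut V E)" arbitrary: E rule: less_induct)
  case (less E)
  show ?case
  proof (cases "removal_stable V E d")
    case True
    then show ?thesis by (intro exI[of _ "{}"]) simp
  next
    case False
    then obtain D where DE: "D \<subseteq> E"
      and grow: "card (uncut V E) ^ d * 2 ^ card D < card (uncut V (E - D)) ^ d"
      unfolding removal_stable_def by (auto simp: not_le)
    have finV: "finite V" using less.prems by (simp add: hypergraph_def)
    have "card (uncut V E) ^ d \<le> card (uncut V E) ^ d * 2 ^ card D" by simp
    with grow have "card (uncut V E) ^ d < card (uncut V (E - D)) ^ d" by linarith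
    then have "card (uncut V E) < card (uncut V (E - D))"
      by (rule power_less_imp_less_base) simp
    with card_uncut_le[OF finV, of "E - D"]
    have "2 ^ card V - card (uncut V (E - D)) < 2 ^ card V - card (uncut V E)" by linarith
    with less.hyps obtain F where FE: "F \<subseteq> E - D"
      and F: "2 ^ card F * card (uncut V (E - D)) ^ d \<le> card (uncut V (E - D - F)) ^ d"
      and stable: "removal_stable V (E - D - F) d"
      using hypergraph_subset[OF less.prems, of "E - D"] by blast
    have card_DF: "card (D \<union> F) = card D + card F"
      using FE DE finite_edges[OF less.prems]
      by (intro card_Un_disjoint) (auto intro: finite_subset)
    have "2 ^ card (D \<union> F) * card (uncut V E) ^ d
          = 2 ^ card F * (card (uncut V E) ^ d * 2 ^ card D)"
      by (simp add: card_DF power_add)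
    also have "\<dots> \<le> 2 ^ card F * card (uncut V (E - D)) ^ d" using grow by simp
    also have "\<dots> \<le> card (uncut V (E - (D \<union> F))) ^ d" using F by (simp add: Diff_eq Int_assoc)
    finally show ?thesis
      using stable DE FE by (intro exI[of _ "D \<union> F"]) (auto simp: Diff_eq Int_assoc)
  qed
qed

lemma card_removed_le:
  assumes hyp: "hypergraph V E"
    and F: "2 ^ card F * card (uncut V E) ^ d \<le> card (uncut V (E - F)) ^ d"
  shows "card F \<le> card V * d"
proof -
  have "(2::nat) ^ card F \<le> 2 ^ card F * card (uncut V E) ^ d"
    using card_uncut_pos[OF hyp] by simp
  also have "\<dots> \<le> card (uncut V (E - F)) ^ d" by (rule F)
  also have "\<dots> \<le> (2 ^ card V) ^ d"
    using hyp card_uncut_le by (intro power_mono) (auto simp: hypergraph_def)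
  also have "\<dots> = 2 ^ (card V * d)" by (simp add: power_mult)
  finally show ?thesis by simp
qed

definition small_cuts :: "'a set \<Rightarrow> 'a set set \<Rightarrow> 'a set set \<Rightarrow> nat \<Rightarrow> 'a set set set" where
  "small_cuts V E C b = {hcut V E S | S. S \<in> uncut V C \<and> card (hcut V E S) \<le> b}"

lemma small_cuts_subset_image: "small_cuts V E C b \<subseteq> hcut V E ` uncut V C"
  unfolding small_cuts_def by blast

lemma finite_small_cuts: "finite V \<Longrightarrow> finite (small_cuts V E C b)"
  by (rule finite_subset[OF small_cuts_subset_image finite_imageI[OF finite_uncut]])

lemma card_small_cuts_le_pow2:
  assumes hyp: "hypergraph V E" and CE: "C \<subseteq> E"
    and index: "card (uncut V C) \<le> 2 ^ n * card (uncut V E)"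
  shows "card (small_cuts V E C b) \<le> 2 ^ n"
proof -
  have "card (small_cuts V E C b) * card (uncut V E) \<le> 2 ^ n * card (uncut V E)"
    using card_cuts_mult_card_uncut_le[OF hyp CE small_cuts_subset_image[of V E C b]] index by linarith
  then show ?thesis using card_uncut_pos[OF hyp] by simp
qed

lemma small_cuts_avoiding_subset:
  "e \<in> E \<Longrightarrow> {D \<in> small_cuts V E C b. e \<notin> D} \<subseteq> small_cuts V E (insert e C) b"
  unfolding small_cuts_def mem_uncut_iff by (auto simp: mem_hcut_iff)

text \<open>The closed form of the recursion \<open>f (n + 1) * (n - a) = f n * n\<close> produced by the
  double count below, started from the trivial bound \<open>f n = 2 ^ n\<close> for \<open>n \<le> a + 1\<close>.\<close>

definition small_cut_bound :: "nat \<Rightarrow> nat \<Rightarrow> nat" where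
  "small_cut_bound a n = (if n \<le> a + 1 then 2 ^ n else 2 ^ (a + 1) * ((n - 1) choose a))"

lemma small_cut_bound_eq: "a + 1 \<le> n \<Longrightarrow> small_cut_bound a n = 2 ^ (a + 1) * ((n - 1) choose a)"
  unfolding small_cut_bound_def by (cases "n = a + 1") auto

lemma small_cut_bound_Suc:
  assumes "a + 1 \<le> n"
  shows "small_cut_bound a (Suc n) * (n - a) = small_cut_bound a n * n"
proof -
  have "small_cut_bound a (Suc n) * (n - a) = 2 ^ (a + 1) * ((n - a) * (n choose a))"
    using small_cut_bound_eq[of a "Suc n"] assms by simp
  also have "\<dots> = 2 ^ (a + 1) * (n * ((n - 1) choose a))"
    by (simp add: binomial_absorb_comp)
  also have "\<dots> = small_cut_bound a n * n"
    using small_cut_bound_eq[OF assms] by simp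
  finally show ?thesis .
qed

lemma small_cut_bound_le_Suc: "small_cut_bound a n \<le> small_cut_bound a (Suc n)"
proof (cases "a + 1 \<le> n")
  case True
  then have "small_cut_bound a n * (n - a) \<le> small_cut_bound a (Suc n) * (n - a)"
    using small_cut_bound_Suc[OF True] by simp
  then show ?thesis using True by simp
next
  case False
  then show ?thesis unfolding small_cut_bound_def by simp
qed

lemma small_cut_bound_le:
  assumes k: "2 \<le> k" and a: "1 \<le> a"
  shows "small_cut_bound a k \<le> (2 * k) ^ (2 * a)"
proof (cases "k \<le> a + 1")
  case True
  have "small_cut_bound a k = 2 ^ k" using True by (simp add: small_cut_bound_def)
  also have "\<dots> \<le> 2 ^ (2 * a)" using True a by (intro power_increasing) auto
  also have "\<dots> \<le> (2 * k) ^ (2 * a)" using k by (intro power_mono) auto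
  finally show ?thesis .
next
  case False
  then have "small_cut_bound a k = 2 ^ (a + 1) * ((k - 1) choose a)"
    by (simp add: small_cut_bound_def)
  also have "\<dots> \<le> 2 ^ (a + 1) * k ^ a"
  proof -
    have "(k - 1) choose a \<le> (k - 1) ^ a" using False by (intro binomial_le_pow) simp
    also have "\<dots> \<le> k ^ a" by (simp add: power_mono)
    finally show ?thesis by simp
  qed
  also have "\<dots> \<le> 2 ^ (2 * a) * k ^ (2 * a)"
  proof (rule mult_le_mono)
    show "(2::nat) ^ (a + 1) \<le> 2 ^ (2 * a)" using a by (intro power_increasing) auto
    show "k ^ a \<le> k ^ (2 * a)" using k by (intro power_increasing) auto
  qed
  also have "\<dots> = (2 * k) ^ (2 * a)" by (simp add: power_mult_distrib)
  finally show ?thesis .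
qed

lemma card_mult_le_by_double_counting:
  fixes M :: "'b set" and K :: "'b set set"
  assumes finM: "finite M" and finK: "finite K"
    and missed: "\<And>D. D \<in> K \<Longrightarrow> b \<le> card (M - D)"
    and missing: "\<And>e. e \<in> M \<Longrightarrow> card {D \<in> K. e \<notin> D} \<le> P"
  shows "card K * b \<le> card M * P"
proof -
  have "card K * b \<le> (\<Sum>D\<in>K. card (M - D))"
    using sum_bounded_below[of K b "\<lambda>D. card (M - D)"] missed by simp
  also have "\<dots> = (\<Sum>D\<in>K. \<Sum>e\<in>M. if e \<notin> D then 1 else 0)"
    using sum.inter_filter[OF finM, of "\<lambda>_. 1::nat"] by (simp add: set_diff_eq)
  also have "\<dots> = (\<Sum>e\<in>M. \<Sum>D\<in>K. if e \<notin> D then 1 else 0)" by (rule sum.swap)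
  also have "\<dots> = (\<Sum>e\<in>M. card {D \<in> K. e \<notin> D})"
    using sum.inter_filter[OF finK, of "\<lambda>_. 1::nat"] by simp
  also have "\<dots> \<le> card M * P"
    using sum_bounded_above[of M "\<lambda>e. card {D \<in> K. e \<notin> D}" P] missing by simp
  finally show ?thesis .
qed

text \<open>As \<open>n * d < m\<close>, the ratio \<open>m / (m - a * d)\<close> is below \<open>n / (n - a)\<close>.\<close>

lemma le_of_counting_ratio:
  fixes K m P P' n a d :: nat
  assumes count: "K * (m - a * d) \<le> m * P'" and ratio: "P * (n - a) = P' * n"
    and m: "n * d < m" and n: "a < n"
  shows "K \<le> P"
proof -
  define u where "u = m - a * d"
  define v where "v = n - a"
  have "a * d \<le> n * d" using n by simp
  with m have m_eq: "m = u + a * d" unfolding u_def by linarith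
  have n_eq: "n = v + a" and v: "0 < v" using n by (auto simp: v_def)
  have vu: "v * d < u" using m unfolding m_eq n_eq by (simp add: algebra_simps)
  then have "a * (v * d) \<le> a * u" by simp
  then have mv: "m * v \<le> n * u" unfolding m_eq n_eq by (simp add: algebra_simps)
  have "K * u * v \<le> m * P' * v" using count unfolding u_def by simp
  also have "\<dots> = P' * (m * v)" by simp
  also have "\<dots> \<le> P' * (n * u)" using mv by simp
  also have "\<dots> = P * v * u" using ratio by (simp add: v_def algebra_simps)
  finally have "K * (u * v) \<le> P * (u * v)" by (simp add: algebra_simps)
  then show ?thesis using vu v by simp
qed

context
  fixes V :: "'a set" and E :: "'a set set" and d :: nat
  assumes hyp: "hypergraph V E" and stable: "removal_stable V E d" and d: "1 \<le> d"
begin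

lemma card_cut_edges_gt:
  assumes CE: "C \<subseteq> E" and index: "2 ^ n * card (uncut V E) < card (uncut V C)"
  shows "n * d < card (\<Union>S\<in>uncut V C. hcut V E S)"
proof -
  define M where "M = (\<Union>S\<in>uncut V C. hcut V E S)"
  define Q where "Q = card (uncut V E)"
  have ME: "M \<subseteq> E" by (auto simp: M_def mem_hcut_iff)
  have "hcut V (E - M) S = {}" if "S \<in> uncut V C" for S
    using that unfolding M_def hcut_def by blast
  then have "uncut V C \<subseteq> uncut V (E - M)" by (auto simp: uncut_def)
  then have "card (uncut V C) ^ d \<le> card (uncut V (E - M)) ^ d"
    using hyp finite_uncut by (intro power_mono card_mono) (auto simp: hypergraph_def)
  also have "\<dots> \<le> Q ^ d * 2 ^ card M"
    using stable ME unfolding removal_stable_def Q_def by blast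
  finally have upper: "card (uncut V C) ^ d \<le> Q ^ d * 2 ^ card M" .
  have "Q ^ d * 2 ^ (n * d) = (2 ^ n * Q) ^ d"
    by (metis mult.commute power_mult power_mult_distrib)
  also have "\<dots> < card (uncut V C) ^ d"
    using index d by (intro power_strict_mono) (auto simp: Q_def)
  finally have "Q ^ d * 2 ^ (n * d) < Q ^ d * 2 ^ card M" using upper by linarith
  then have "(2::nat) ^ (n * d) < 2 ^ card M" by simp
  then show ?thesis by (simp add: M_def)
qed

lemma card_small_cuts_le:
  assumes "C \<subseteq> E" and "card (uncut V C) \<le> 2 ^ n * card (uncut V E)"
  shows "card (small_cuts V E C (a * d)) \<le> small_cut_bound a n"
  using assms
proof (induction n arbitrary: C)
  case 0
  then show ?case
    using card_small_cuts_le_pow2[OF hyp, of C 0] by (simp add: small_cut_bound_def)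
next
  case (Suc n)
  consider "Suc n \<le> a + 1" | "card (uncut V C) \<le> 2 ^ n * card (uncut V E)"
    | "a + 1 \<le> n" and "2 ^ n * card (uncut V E) < card (uncut V C)"
    by linarith
  then show ?case
  proof cases
    case 1
    then show ?thesis
      using card_small_cuts_le_pow2[OF hyp Suc.prems] by (simp add: small_cut_bound_def)
  next
    case 2
    then show ?thesis using Suc.IH[OF Suc.prems(1) 2] small_cut_bound_le_Suc[of a n] by linarith
  next
    case 3
    define M where "M = (\<Union>S\<in>uncut V C. hcut V E S)"
    define K where "K = small_cuts V E C (a * d)"
    have finM: "finite M"
      using finite_edges[OF hyp] by (rule finite_subset[rotated]) (auto simp: M_def mem_hcut_iff)
    have count: "card K * (card M - a * d) \<le> card M * small_cut_bound a n"
    proof (rule card_mult_le_by_double_counting[OF finM])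
      show "finite K" using hyp by (simp add: K_def finite_small_cuts hypergraph_def)
    next
      fix D assume "D \<in> K"
      then obtain S where "S \<in> uncut V C" and D: "D = hcut V E S" and "card D \<le> a * d"
        by (auto simp: K_def small_cuts_def)
      moreover from this have "D \<subseteq> M" by (auto simp: M_def)
      ultimately show "card M - a * d \<le> card (M - D)"
        using finM by (simp add: card_Diff_subset finite_subset)
    next
      fix e assume "e \<in> M"
      then obtain S0 where S0: "S0 \<in> uncut V C" and e: "e \<in> hcut V E S0"
        by (auto simp: M_def)
      have eE: "e \<in> E" using e by (simp add: mem_hcut_iff)
      have "2 * card (uncut V (insert e C)) \<le> card (uncut V C)"
        using e eE Suc.prems(1)
        by (intro card_uncut_insert_half[OF hypergraph_subset[OF hyp] S0])
           (auto simp: mem_hcut_iff)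
      then have "card (small_cuts V E (insert e C) (a * d)) \<le> small_cut_bound a n"
        using Suc.IH[of "insert e C"] Suc.prems eE by simp
      moreover have "card {D \<in> K. e \<notin> D} \<le> card (small_cuts V E (insert e C) (a * d))"
        using hyp small_cuts_avoiding_subset[OF eE]
        by (intro card_mono finite_small_cuts) (auto simp: K_def hypergraph_def)
      ultimately show "card {D \<in> K. e \<notin> D} \<le> small_cut_bound a n" by linarith
    qed
    have "n * d < card M"
      unfolding M_def by (rule card_cut_edges_gt[OF Suc.prems(1) 3(2)])
    from le_of_counting_ratio[OF count small_cut_bound_Suc[OF 3(1)] this] 3(1)
    show ?thesis by (simp add: K_def)
  qed
qed

end

theorem theorem1p3:
  fixes V :: "'a set" and E :: "'a set set" and k d :: nat
  assumes "hypergraph V E" and "card V = k" and "k \<ge> 2" and "d \<ge> 1"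
  shows "\<exists>F \<subseteq> E. card F \<le> k * d \<and>
           (\<forall>\<alpha>::nat. \<alpha> \<ge> 1 \<longrightarrow>
              card {hcut V (E - F) S | S. S \<subseteq> V \<and> card (hcut V (E - F) S) \<le> \<alpha> * d}
                \<le> (2 * k) ^ (2 * \<alpha>))"
proof -
  obtain F where FE: "F \<subseteq> E"
    and grow: "2 ^ card F * card (uncut V E) ^ d \<le> card (uncut V (E - F)) ^ d"
    and stable: "removal_stable V (E - F) d"
    using exists_removal_stable[OF assms(1)] by blast
  have hypF: "hypergraph V (E - F)" using assms(1) by (rule hypergraph_subset) blast
  have index: "card (uncut V {}) \<le> 2 ^ k * card (uncut V (E - F))"
    using card_uncut_pos[OF hypF] assms(1,2) by (simp add: hypergraph_def card_Pow)
  have "card {hcut V (E - F) S | S. S \<subseteq> V \<and> card (hcut V (E - F) S) \<le> \<alpha> * d}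
          \<le> (2 * k) ^ (2 * \<alpha>)" if "\<alpha> \<ge> 1" for \<alpha>
  proof -
    have "card {hcut V (E - F) S | S. S \<subseteq> V \<and> card (hcut V (E - F) S) \<le> \<alpha> * d}
          = card (small_cuts V (E - F) {} (\<alpha> * d))"
      by (simp add: small_cuts_def)
    also have "\<dots> \<le> small_cut_bound \<alpha> k"
      by (rule card_small_cuts_le[OF hypF stable assms(4) _ index]) simp
    also have "\<dots> \<le> (2 * k) ^ (2 * \<alpha>)" by (rule small_cut_bound_le[OF assms(3) that])
    finally show ?thesis .
  qed
  then show ?thesis using FE card_removed_le[OF assms(1) grow] assms(2) by blast
qed

end
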